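(* The approximation guarantee $(1/n)^n$ of the generalized student-proposing deferred acceptance algorithm with the HERF method is tight even when $|F|=2$: for every number of students $n$, the infimum over instances with $n$ students and $|F|=2$ of $\mathsf{ProS}(\mathsf{Alg}(\mathcal I);\mathcal I)/\max_\pi\mathsf{ProS}(\pi;\mathcal I)$ is at most $(1/n)^n$.
   Context: Model: students $N$ ($|N|=n$); colleges $M$, each college $c$ with positive integer capacity $x_c$ and strict preference $\succ_c$ over $N$; features $F$; utilities $u_s^f:M\to[0,1]$; for each student $s$ an independent distribution $\mu_s$ over weight vectors $w_s$ ($w_s^f\ge0$, $\sum_f w_s^f=1$). For realized $w_s$, $c\succeq_s^{w_s}c'$ iff $\sum_f w_s^fu_s^f(c)\ge\sum_f w_s^fu_s^f(c')$, strict version $\succ_s^{w_s}$; $\mathsf{null}$ ranked below any college. A matching $\pi$ gives each student at most one college and each college at most $x_c$ students; it is (weakly) stable for realized weights if no pair $(s,c)$ has $c\succ_s^{w_s}\pi(s)$ and either $|\pi(c)|<x_c$ or some $s'\in\pi(c)$ with $s\succ_c s'$. $\mathsf{ProS}(\pi;\mathcal I)$ = probability over independent $w_s\sim\mu_s$ that $\pi$ is stable. Generalized student-proposing DA: all students start unmatched with $R_s=\emptyset$; while some unmatched student $s$ has $R_s\ne M$, each such student proposes to $\mathsf{Next}(s,R_s)\notin R_s$; each college keeps its $x_c$ most preferred students among those it holds and its new proposers and rejects the rest (rejected students add the college to $R_s$ and become unmatched). HERF: $\mathsf{Next}$ returns a college in $\arg\max_{c\notin R_s}\Pr[c\succeq_s^{w_s}c'\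 \forall c'\notin R_s,c'\ne c]$. *)

theory Defs
  imports "HOL-Probability.Probability"
begin

text \<open>
Students are N = {0..<n} (nat), colleges are a finite set M of nats,
features F = UNIV :: bool (so |F| = 2). A weight vector (w^True, w^False) with
nonnegative entries summing to 1 is represented by the real number w = w^True in [0,1],
w^False = 1 - w. College c's strict preference is the relation r c:
(s, s') in r c means s is preferred to s' by c. A matching is pi :: nat => nat option
(None = null).
\<close>

definition students :: "nat \<Rightarrow> nat set" where
  "students n = {0..<n}"

definition valid_instance ::
  "nat \<Rightarrow> nat set \<Rightarrow> (nat \<Rightarrow> nat) \<Rightarrow> (nat \<Rightarrow> (nat \<times> nat) set)
   \<Rightarrow> (nat \<Rightarrow> bool \<Rightarrow> nat \<Rightarrow> real) \<Rightarrow> (nat \<Rightarrow> real measure) \<Rightarrow> bool" where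
  "valid_instance n M x r u \<mu> \<longleftrightarrow>
     finite M \<and>
     (\<forall>c\<in>M. x c \<ge> 1) \<and>
     (\<forall>c\<in>M. r c \<subseteq> students n \<times> students n \<and> strict_linear_order_on (students n) (r c)) \<and>
     (\<forall>s\<in>students n. \<forall>f c. c \<in> M \<longrightarrow> 0 \<le> u s f c \<and> u s f c \<le> 1) \<and>
     (\<forall>s\<in>students n. prob_space (\<mu> s) \<and> sets (\<mu> s) = sets borel \<and>
        (AE w in \<mu> s. 0 \<le> w \<and> w \<le> 1))"

definition score :: "(nat \<Rightarrow> bool \<Rightarrow> nat \<Rightarrow> real) \<Rightarrow> nat \<Rightarrow> real \<Rightarrow> nat \<Rightarrow> real" where
  "score u s w c = w * u s True c + (1 - w) * u s False c"

definition sprefers :: "(nat \<Rightarrow> bool \<Rightarrow> nat \<Rightarrow> real) \<Rightarrow> nat \<Rightarrow> real \<Rightarrow> nat \<Rightarrow> nat option \<Rightarrow> bool" where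
  "sprefers u s w c opt = (case opt of None \<Rightarrow> True | Some c' \<Rightarrow> score u s w c > score u s w c')"

definition is_matching :: "nat \<Rightarrow> nat set \<Rightarrow> (nat \<Rightarrow> nat) \<Rightarrow> (nat \<Rightarrow> nat option) \<Rightarrow> bool" where
  "is_matching n M x \<pi> \<longleftrightarrow>
     (\<forall>s. s \<notin> students n \<longrightarrow> \<pi> s = None) \<and>
     (\<forall>s c. \<pi> s = Some c \<longrightarrow> c \<in> M) \<and>
     (\<forall>c\<in>M. card {s\<in>students n. \<pi> s = Some c} \<le> x c)"

definition stable_for ::
  "nat \<Rightarrow> nat set \<Rightarrow> (nat \<Rightarrow> nat) \<Rightarrow> (nat \<Rightarrow> (nat \<times> nat) set)
   \<Rightarrow> (nat \<Rightarrow> bool \<Rightarrow> nat \<Rightarrow> real) \<Rightarrow> (nat \<Rightarrow> nat option) \<Rightarrow> (nat \<Rightarrow> real) \<Rightarrow> bool" where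
  "stable_for n M x r u \<pi> w \<longleftrightarrow>
     \<not> (\<exists>s\<in>students n. \<exists>c\<in>M. sprefers u s (w s) c (\<pi> s) \<and>
          (card {s'\<in>students n. \<pi> s' = Some c} < x c \<or>
           (\<exists>s'\<in>students n. \<pi> s' = Some c \<and> (s, s') \<in> r c)))"

definition ProS ::
  "nat \<Rightarrow> nat set \<Rightarrow> (nat \<Rightarrow> nat) \<Rightarrow> (nat \<Rightarrow> (nat \<times> nat) set)
   \<Rightarrow> (nat \<Rightarrow> bool \<Rightarrow> nat \<Rightarrow> real) \<Rightarrow> (nat \<Rightarrow> real measure) \<Rightarrow> (nat \<Rightarrow> nat option) \<Rightarrow> real" where
  "ProS n M x r u \<mu> \<pi> =
     measure (PiM (students n) \<mu>) {w \<in> space (PiM (students n) \<mu>). stable_for n M x r u \<pi> w}"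

definition OPT ::
  "nat \<Rightarrow> nat set \<Rightarrow> (nat \<Rightarrow> nat) \<Rightarrow> (nat \<Rightarrow> (nat \<times> nat) set)
   \<Rightarrow> (nat \<Rightarrow> bool \<Rightarrow> nat \<Rightarrow> real) \<Rightarrow> (nat \<Rightarrow> real measure) \<Rightarrow> real" where
  "OPT n M x r u \<mu> = Max (ProS n M x r u \<mu> ` {\<pi>. is_matching n M x \<pi>})"

definition herf_prob ::
  "nat set \<Rightarrow> (nat \<Rightarrow> bool \<Rightarrow> nat \<Rightarrow> real) \<Rightarrow> (nat \<Rightarrow> real measure) \<Rightarrow> nat \<Rightarrow> nat set \<Rightarrow> nat \<Rightarrow> real" where
  "herf_prob M u \<mu> s R c =
     measure (\<mu> s) {w \<in> space (\<mu> s). \<forall>c'\<in>M - R. c' \<noteq> c \<longrightarrow> score u s w c' \<le> score u s w c}"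

text \<open>A Next function implementing HERF (with arbitrary tie-breaking).\<close>
definition herf_rule ::
  "nat \<Rightarrow> nat set \<Rightarrow> (nat \<Rightarrow> bool \<Rightarrow> nat \<Rightarrow> real) \<Rightarrow> (nat \<Rightarrow> real measure)
   \<Rightarrow> (nat \<Rightarrow> nat set \<Rightarrow> nat) \<Rightarrow> bool" where
  "herf_rule n M u \<mu> nx \<longleftrightarrow>
     (\<forall>s\<in>students n. \<forall>R. R \<subseteq> M \<and> R \<noteq> M \<longrightarrow>
        nx s R \<in> M - R \<and> (\<forall>c\<in>M - R. herf_prob M u \<mu> s R c \<le> herf_prob M u \<mu> s R (nx s R)))"

text \<open>DA state: (held, R) where held c = students currently held by college c,
  R s = colleges that have rejected s.\<close>
type_synonym da_state = "(nat \<Rightarrow> nat set) \<times> (nat \<Rightarrow> nat set)"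

definition keep :: "(nat \<Rightarrow> nat) \<Rightarrow> (nat \<Rightarrow> (nat \<times> nat) set) \<Rightarrow> nat \<Rightarrow> nat set \<Rightarrow> nat set" where
  "keep x r c S = {s\<in>S. card {s'\<in>S. (s', s) \<in> r c} < x c}"

definition da_step ::
  "nat \<Rightarrow> nat set \<Rightarrow> (nat \<Rightarrow> nat) \<Rightarrow> (nat \<Rightarrow> (nat \<times> nat) set)
   \<Rightarrow> (nat \<Rightarrow> nat set \<Rightarrow> nat) \<Rightarrow> da_state \<Rightarrow> da_state" where
  "da_step n M x r nx st =
     (let held = fst st; R = snd st;
          P = {s\<in>students n. (\<forall>c\<in>M. s \<notin> held c) \<and> R s \<noteq> M};
          cand = (\<lambda>c. held c \<union> {s\<in>P. nx s (R s) = c});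
          held' = (\<lambda>c. if c \<in> M then keep x r c (cand c) else {});
          R' = (\<lambda>s. R s \<union> {c\<in>M. s \<in> cand c - held' c})
      in (held', R'))"

definition da_init :: da_state where
  "da_init = ((\<lambda>c. {}), (\<lambda>s. {}))"

definition state_matching :: "nat set \<Rightarrow> da_state \<Rightarrow> nat \<Rightarrow> nat option" where
  "state_matching M st s =
     (if \<exists>c\<in>M. s \<in> fst st c then Some (THE c. c \<in> M \<and> s \<in> fst st c) else None)"

text \<open>The DA terminates within n*|M|+1 rounds (each non-final round rejects a new
  (student, college) pair), after which da_step is the identity; we iterate enough rounds.\<close>
definition alg_out ::
  "nat \<Rightarrow> nat set \<Rightarrow> (nat \<Rightarrow> nat) \<Rightarrow> (nat \<Rightarrow> (nat \<times> nat) set)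
   \<Rightarrow> (nat \<Rightarrow> nat set \<Rightarrow> nat) \<Rightarrow> nat \<Rightarrow> nat option" where
  "alg_out n M x r nx = state_matching M ((da_step n M x r nx ^^ (n * card M + 2)) da_init)"

end

theory Submission
  imports Defs
begin

text \<open>
  Place college c at position c/n in [0,1]. With the utilities quad_util, a student with weight
  w values college c at (1 + w^2 - (w - c/n)^2)/2, so he prefers the colleges closest to w.
  Student s draws his weight uniformly from the positions, with K copies of each position and
  one extra copy of s/n. HERF therefore proposes s to college s first: it is best with
  probability (K+1)/(nK+1), every other college only with K/(nK+1). Nobody competes, so DA
  matches every student to his own college, and this matching is stable only if every student
  draws his own position, which has probability ((K+1)/(nK+1))^n. If each college ranks the
  student just below it first and its own student last, the cyclic shift s \<mapsto> s+1 is stable for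
  every realization of the weights. Letting K \<rightarrow> \<infinity> gives the ratio (1/n)^n.
\<close>

section \<open>Deferred acceptance without conflicts in the first round\<close>

lemma keep_eq_self:
  assumes "finite S" "card S \<le> x c" "irrefl (r c)"
  shows "keep x r c S = S"
proof -
  have "card {s'\<in>S. (s', s) \<in> r c} < x c" if "s \<in> S" for s
  proof -
    have "{s'\<in>S. (s', s) \<in> r c} \<subseteq> S - {s}"
      using assms(3) by (auto simp: irrefl_def)
    then have "card {s'\<in>S. (s', s) \<in> r c} \<le> card (S - {s})"
      using assms(1) by (intro card_mono) auto
    also have "\<dots> = card S - 1"
      using that by (rule card_Diff_singleton)
    finally have "card {s'\<in>S. (s', s) \<in> r c} \<le> card S - 1" .
    moreover have "card S > 0"
      using assms(1) that by (auto simp: card_gt_0_iff)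
    ultimately show ?thesis
      using assms(2) by linarith
  qed
  then show ?thesis
    unfolding keep_def by blast
qed

lemma alg_out_first_choices:
  assumes into: "\<forall>s\<in>students n. nx s {} \<in> M"
    and uncontested: "\<forall>c\<in>M. card {s\<in>students n. nx s {} = c} \<le> x c"
    and irrefl: "\<forall>c\<in>M. irrefl (r c)"
  shows "alg_out n M x r nx = (\<lambda>s. if s \<in> students n then Some (nx s {}) else None)"
proof -
  define held where "held c = {s\<in>students n. nx s {} = c}" for c
  have keep_held: "keep x r c (held c) = held c" if "c \<in> M" for c
    using keep_eq_self[of "held c" x c r] uncontested irrefl that
    by (simp add: held_def students_def)
  have held_outside: "held c = {}" if "c \<notin> M" for c
    using into that by (auto simp: held_def)
  have step: "da_step n M x r nx (h, \<lambda>s. {}) = (held, \<lambda>s. {})"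
    if cand: "\<And>c. h c \<union> {s\<in>{s\<in>students n. (\<forall>c\<in>M. s \<notin> h c) \<and> {} \<noteq> M}. nx s {} = c} = held c"
    for h
  proof -
    have held': "(\<lambda>c. if c \<in> M then keep x r c (held c) else {}) = held"
      using keep_held held_outside by (simp add: fun_eq_iff)
    show ?thesis
      unfolding da_step_def Let_def fst_conv snd_conv cand held' using keep_held by (auto simp: fun_eq_iff)
  qed
  have first_round: "da_step n M x r nx da_init = (held, \<lambda>s. {})"
    unfolding da_init_def using into by (intro step) (auto simp: held_def)
  have fixed: "da_step n M x r nx (held, \<lambda>s. {}) = (held, \<lambda>s. {})"
    using into by (intro step) (auto simp: held_def)
  have "(da_step n M x r nx ^^ k) (held, \<lambda>s. {}) = (held, \<lambda>s. {})" for k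
    using fixed by (induction k) auto
  then have terminal: "(da_step n M x r nx ^^ (n * card M + 2)) da_init = (held, \<lambda>s. {})"
    using first_round fixed by (simp add: funpow_Suc_right del: funpow.simps)
  have matching: "state_matching M (held, \<lambda>s. {}) s = (if s \<in> students n then Some (nx s {}) else None)"
    for s
  proof (cases "s \<in> students n")
    case True
    then have "(THE c. c \<in> M \<and> s \<in> held c) = nx s {}"
      using into by (intro the_equality) (auto simp: held_def)
    then show ?thesis
      using True into by (auto simp: state_matching_def held_def)
  qed (simp add: state_matching_def held_def)
  show ?thesis
    unfolding alg_out_def terminal using matching by (rule ext)
qed

section \<open>Stability probabilities\<close>

lemma measure_PiM_Collect_all:
  assumes "finite I" "\<And>i. prob_space (M i)" "\<And>i. i \<in> I \<Longrightarrow> A i \<in> sets (M i)"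
  shows "measure (PiM I M) {w \<in> space (PiM I M). \<forall>i\<in>I. w i \<in> A i} = (\<Prod>i\<in>I. measure (M i) (A i))"
proof -
  interpret finite_product_prob_space M I
    using assms(1,2) product_prob_spaceI[of M]
    by (simp add: finite_product_prob_space_def finite_product_sigma_finite_def
        finite_product_sigma_finite_axioms_def product_prob_space_def)
  have "A i \<subseteq> space (M i)" if "i \<in> I" for i
    using assms(3)[OF that] by (rule sets.sets_into_space)
  then have "{w \<in> space (PiM I M). \<forall>i\<in>I. w i \<in> A i} = PiE I A"
    by (auto simp: space_PiM PiE_iff extensional_def)
  then show ?thesis
    using assms(3) by (simp add: prob_times)
qed

lemma finite_matchings: "finite M \<Longrightarrow> finite {\<pi>. is_matching n M x \<pi>}"
proof (rule finite_subset)
  show "{\<pi>. is_matching n M x \<pi>} \<subseteq>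
      {\<pi>. \<forall>s. (s \<in> students n \<longrightarrow> \<pi> s \<in> insert None (Some ` M)) \<and>
            (s \<notin> students n \<longrightarrow> \<pi> s = None)}"
    by (auto simp: is_matching_def)
qed (rule finite_set_of_finite_funs, auto simp: students_def)

lemma OPT_eq_1_if_always_stable:
  assumes "valid_instance n M x r u \<mu>" "is_matching n M x \<pi>" "\<And>w. stable_for n M x r u \<pi> w"
  shows "OPT n M x r u \<mu> = 1"
proof -
  interpret prob_space "PiM (students n) \<mu>"
    using assms(1) by (intro prob_space_PiM) (simp add: valid_instance_def)
  have "ProS n M x r u \<mu> \<pi> = 1"
    using assms(3) by (simp add: ProS_def prob_space)
  then have attained: "1 \<in> ProS n M x r u \<mu> ` {\<pi>. is_matching n M x \<pi>}"
    using assms(2) by force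
  have bounded: "ProS n M x r u \<mu> \<pi>' \<le> 1" for \<pi>'
    by (simp add: ProS_def)
  have finite_values: "finite (ProS n M x r u \<mu> ` {\<pi>. is_matching n M x \<pi>})"
    using assms(1) by (intro finite_imageI finite_matchings) (simp add: valid_instance_def)
  show ?thesis
    unfolding OPT_def
  proof (rule antisym)
    show "Max (ProS n M x r u \<mu> ` {\<pi>. is_matching n M x \<pi>}) \<le> 1"
      using finite_values attained bounded by (subst Max_le_iff) blast+
    show "1 \<le> Max (ProS n M x r u \<mu> ` {\<pi>. is_matching n M x \<pi>})"
      using finite_values attained by (rule Max_ge)
  qed
qed

definition best_region :: "nat set \<Rightarrow> (nat \<Rightarrow> bool \<Rightarrow> nat \<Rightarrow> real) \<Rightarrow> nat \<Rightarrow> nat \<Rightarrow> real set" where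
  "best_region M u s c = {w. \<forall>c'\<in>M. c' \<noteq> c \<longrightarrow> score u s w c' \<le> score u s w c}"

lemma best_region_borel: "finite M \<Longrightarrow> best_region M u s c \<in> sets borel"
  unfolding best_region_def score_def by measurable

lemma herf_prob_empty:
  "space (\<mu> s) = UNIV \<Longrightarrow> herf_prob M u \<mu> s {} c = measure (\<mu> s) (best_region M u s c)"
  by (simp add: herf_prob_def best_region_def)

section \<open>A tight instance\<close>

definition position :: "nat \<Rightarrow> nat \<Rightarrow> real" where
  "position n c = real c / real n"

definition quad_util :: "nat \<Rightarrow> nat \<Rightarrow> bool \<Rightarrow> nat \<Rightarrow> real" where
  "quad_util n s f c =
     (if f then (1 + 2 * position n c - (position n c)\<^sup>2) / 2 else (1 - (position n c)\<^sup>2) / 2)"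

lemma score_quad_util: "score (quad_util n) s w c = (1 + w\<^sup>2 - (w - position n c)\<^sup>2) / 2"
  by (simp add: score_def quad_util_def field_simps power2_eq_square)

lemma score_quad_util_less:
  assumes "c < n" "j < n" "c \<noteq> j"
  shows "score (quad_util n) s (position n j) c < score (quad_util n) s (position n j) j"
proof -
  have "position n c \<noteq> position n j"
    using assms by (simp add: position_def)
  then have "0 < (position n j - position n c)\<^sup>2"
    by simp
  then show ?thesis
    unfolding score_quad_util by simp
qed

lemma position_in_best_region_iff:
  assumes "c < n" "j < n"
  shows "position n j \<in> best_region {0..<n} (quad_util n) s c \<longleftrightarrow> j = c"
proof
  assume best: "position n j \<in> best_region {0..<n} (quad_util n) s c"
  show "j = c"
  proof (rule ccontr)
    assume "j \<noteq> c"
    then have "score (quad_util n) s (position n j) j \<le> score (quad_util n) s (position n j) c"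
      using best assms by (simp add: best_region_def)
    with score_quad_util_less[OF assms \<open>j \<noteq> c\<close>[symmetric], of s] show False
      by linarith
  qed
next
  assume "j = c"
  then show "position n j \<in> best_region {0..<n} (quad_util n) s c"
    using score_quad_util_less[OF _ assms(2)] by (auto simp: best_region_def less_imp_le)
qed

lemma quad_util_bounds:
  assumes "c < n"
  shows "0 \<le> quad_util n s f c \<and> quad_util n s f c \<le> 1"
proof -
  define t where "t = position n c"
  have "0 \<le> t" "t \<le> 1"
    using assms by (simp_all add: t_def position_def)
  moreover from this have "t * t \<le> t" "0 \<le> (1 - t) * (1 - t)"
    by (simp_all add: mult_left_le)
  ultimately show ?thesis
    unfolding quad_util_def t_def[symmetric]
    by (cases f) (simp_all add: power2_eq_square algebra_simps)
qed

text \<open>The pair (c, k) stands for the k-th copy of the position c/n.\<close>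
definition weight_samples :: "nat \<Rightarrow> nat \<Rightarrow> nat \<Rightarrow> (nat \<times> nat) set" where
  "weight_samples n K s = {0..<n} \<times> {0..<K} \<union> {(s, K)}"

definition perturbed_dist :: "nat \<Rightarrow> nat \<Rightarrow> nat \<Rightarrow> real measure" where
  "perturbed_dist n K s =
     distr (measure_pmf (pmf_of_set (weight_samples n K s))) borel (\<lambda>p. position n (fst p))"

lemma measure_distr_pmf_of_set:
  assumes "finite S" "S \<noteq> {}" "A \<in> sets borel"
  shows "measure (distr (measure_pmf (pmf_of_set S)) borel f) A = card {p\<in>S. f p \<in> A} / card S"
  using assms by (simp add: measure_distr measure_pmf_of_set Int_def conj_commute)

lemma prob_space_perturbed_dist: "prob_space (perturbed_dist n K s)"
  unfolding perturbed_dist_def by (rule prob_space.prob_space_distr) (simp_all add: prob_space_measure_pmf)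

lemma sets_perturbed_dist [simp]: "sets (perturbed_dist n K s) = sets borel"
  by (simp add: perturbed_dist_def)

lemma space_perturbed_dist [simp]: "space (perturbed_dist n K s) = UNIV"
  by (simp add: perturbed_dist_def)

lemma card_weight_samples: "s < n \<Longrightarrow> card (weight_samples n K s) = n * K + 1"
  unfolding weight_samples_def by (subst card_Un_disjoint) (auto simp: card_cartesian_product)

lemma card_weight_samples_at:
  assumes "s < n" "c < n"
  shows "card {p\<in>weight_samples n K s. fst p = c} = K + (if c = s then 1 else 0)"
proof -
  have "{p\<in>weight_samples n K s. fst p = c} = {c} \<times> {0..<K} \<union> (if c = s then {(s, K)} else {})"
    using assms by (auto simp: weight_samples_def)
  then show ?thesis
    by (simp add: card_Un_disjoint card_cartesian_product)
qed

lemma measure_perturbed_dist_best_region: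
  assumes "s < n" "c < n"
  shows "measure (perturbed_dist n K s) (best_region {0..<n} (quad_util n) s c)
    = real (K + (if c = s then 1 else 0)) / real (n * K + 1)"
proof -
  have "{p\<in>weight_samples n K s. position n (fst p) \<in> best_region {0..<n} (quad_util n) s c}
      = {p\<in>weight_samples n K s. fst p = c}"
    using assms position_in_best_region_iff[OF assms(2)] by (auto simp: weight_samples_def)
  then show ?thesis
    unfolding perturbed_dist_def
    using assms card_weight_samples card_weight_samples_at
    by (subst measure_distr_pmf_of_set) (auto simp: weight_samples_def best_region_borel)
qed

lemma herf_rule_first_choice:
  assumes herf: "herf_rule n {0..<n} (quad_util n) (perturbed_dist n K) nx" and "s < n"
  shows "nx s {} = s"
proof (rule ccontr)
  assume "nx s {} \<noteq> s"
  have "nx s {} < n"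
    and "herf_prob {0..<n} (quad_util n) (perturbed_dist n K) s {} s
      \<le> herf_prob {0..<n} (quad_util n) (perturbed_dist n K) s {} (nx s {})"
    using herf \<open>s < n\<close> by (auto simp: herf_rule_def students_def)
  then have "real (K + 1) / real (n * K + 1) \<le> real K / real (n * K + 1)"
    using \<open>s < n\<close> \<open>nx s {} \<noteq> s\<close>
    by (simp add: herf_prob_empty measure_perturbed_dist_best_region)
  moreover have "(0::real) < 1 + real n * real K"
    by (intro add_pos_nonneg) simp_all
  ultimately show False
    by (simp add: divide_le_cancel)
qed

definition top_student :: "nat \<Rightarrow> nat \<Rightarrow> nat" where
  "top_student n c = (if c = 0 then n - 1 else c - 1)"

definition cyclic_rank :: "nat \<Rightarrow> nat \<Rightarrow> nat \<Rightarrow> nat" where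
  "cyclic_rank n c s = (if s = c then n + 1 else if s = top_student n c then 0 else s + 1)"

definition cyclic_pref :: "nat \<Rightarrow> nat \<Rightarrow> (nat \<times> nat) set" where
  "cyclic_pref n c = {(s, s'). s < n \<and> s' < n \<and> cyclic_rank n c s < cyclic_rank n c s'}"

lemma strict_linear_order_on_cyclic_pref: "strict_linear_order_on (students n) (cyclic_pref n c)"
  unfolding strict_linear_order_on_def trans_def irrefl_def total_on_def cyclic_pref_def students_def
  by (auto simp: cyclic_rank_def split: if_splits)

lemma cyclic_pref_own_last_iff: "s < n \<Longrightarrow> c < n \<Longrightarrow> (s, c) \<in> cyclic_pref n c \<longleftrightarrow> s \<noteq> c"
  by (auto simp: cyclic_pref_def cyclic_rank_def)

lemma cyclic_pref_top: "(s, top_student n c) \<notin> cyclic_pref n c"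
  by (auto simp: cyclic_pref_def cyclic_rank_def top_student_def split: if_splits)

lemma valid_instance_perturbed:
  "valid_instance n {0..<n} (\<lambda>_. 1) (cyclic_pref n) (quad_util n) (perturbed_dist n K)"
proof -
  have "AE w in perturbed_dist n K s. 0 \<le> w \<and> w \<le> 1" if "s < n" for s
  proof -
    have "AE p in measure_pmf (pmf_of_set (weight_samples n K s)). fst p < n"
      using that by (intro AE_pmfI) (auto simp: weight_samples_def)
    then show ?thesis
      unfolding perturbed_dist_def by (subst AE_distr_iff) (auto simp: position_def)
  qed
  then show ?thesis
    using strict_linear_order_on_cyclic_pref quad_util_bounds prob_space_perturbed_dist
    by (auto simp: valid_instance_def cyclic_pref_def students_def)
qed

definition own_matching :: "nat \<Rightarrow> nat \<Rightarrow> nat option" where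
  "own_matching n s = (if s < n then Some s else None)"

lemma alg_out_herf:
  assumes "herf_rule n {0..<n} (quad_util n) (perturbed_dist n K) nx"
  shows "alg_out n {0..<n} (\<lambda>_. 1) (cyclic_pref n) nx = own_matching n"
proof -
  have first: "nx s {} = s" if "s \<in> students n" for s
    using herf_rule_first_choice[OF assms] that by (simp add: students_def)
  have "card {s\<in>students n. nx s {} = c} \<le> card {c}" for c
    using first by (intro card_mono) auto
  moreover have "irrefl (cyclic_pref n c)" for c
    using strict_linear_order_on_cyclic_pref by (simp add: strict_linear_order_on_def)
  ultimately show ?thesis
    using first
    by (subst alg_out_first_choices) (auto simp: students_def own_matching_def fun_eq_iff)
qed

lemma stable_own_matching_iff:
  "stable_for n {0..<n} (\<lambda>_. 1) (cyclic_pref n) u (own_matching n) w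
     \<longleftrightarrow> (\<forall>s<n. w s \<in> best_region {0..<n} u s s)"
proof
  assume stable: "stable_for n {0..<n} (\<lambda>_. 1) (cyclic_pref n) u (own_matching n) w"
  show "\<forall>s<n. w s \<in> best_region {0..<n} u s s"
  proof (intro allI impI)
    fix s
    assume "s < n"
    have "score u s (w s) c \<le> score u s (w s) s" if "c < n" "c \<noteq> s" for c
    proof (rule ccontr)
      assume "\<not> ?thesis"
      then have "sprefers u s (w s) c (own_matching n s)"
        using \<open>s < n\<close> by (simp add: sprefers_def own_matching_def)
      moreover have "own_matching n c = Some c" "(s, c) \<in> cyclic_pref n c"
        using that \<open>s < n\<close> cyclic_pref_own_last_iff by (auto simp: own_matching_def)
      ultimately show False
        using stable that \<open>s < n\<close> unfolding stable_for_def students_def by auto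
    qed
    then show "w s \<in> best_region {0..<n} u s s"
      by (simp add: best_region_def)
  qed
next
  assume best: "\<forall>s<n. w s \<in> best_region {0..<n} u s s"
  show "stable_for n {0..<n} (\<lambda>_. 1) (cyclic_pref n) u (own_matching n) w"
    unfolding stable_for_def
  proof (rule notI, elim bexE conjE)
    fix s c
    assume "s \<in> students n" "c \<in> {0..<n}" "sprefers u s (w s) c (own_matching n s)"
    then have "s < n" "c < n" and better: "score u s (w s) s < score u s (w s) c"
      by (simp_all add: students_def sprefers_def own_matching_def)
    moreover from better have "c \<noteq> s"
      by auto
    ultimately have "score u s (w s) c \<le> score u s (w s) s"
      using best by (simp add: best_region_def)
    with better show False
      by simp
  qed
qed

lemma ProS_own_matching:
  "ProS n {0..<n} (\<lambda>_. 1) (cyclic_pref n) (quad_util n) (perturbed_dist n K) (own_matching n)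
     = (real (K + 1) / real (n * K + 1)) ^ n"
proof -
  let ?B = "\<lambda>s. best_region {0..<n} (quad_util n) s s"
  have "ProS n {0..<n} (\<lambda>_. 1) (cyclic_pref n) (quad_util n) (perturbed_dist n K) (own_matching n)
      = measure (PiM (students n) (perturbed_dist n K))
          {w \<in> space (PiM (students n) (perturbed_dist n K)). \<forall>s\<in>students n. w s \<in> ?B s}"
    unfolding ProS_def stable_own_matching_iff by (simp add: students_def Ball_def)
  also have "\<dots> = (\<Prod>s\<in>students n. measure (perturbed_dist n K s) (?B s))"
    by (rule measure_PiM_Collect_all) (simp_all add: students_def prob_space_perturbed_dist best_region_borel)
  also have "\<dots> = (\<Prod>s\<in>students n. real (K + 1) / real (n * K + 1))"
    by (rule prod.cong) (simp_all add: students_def measure_perturbed_dist_best_region)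
  finally show ?thesis
    by (simp add: students_def)
qed

definition shift_matching :: "nat \<Rightarrow> nat \<Rightarrow> nat option" where
  "shift_matching n s = (if s < n then Some (if s = n - 1 then 0 else s + 1) else None)"

lemma shift_matching_holder:
  "c < n \<Longrightarrow> {s\<in>students n. shift_matching n s = Some c} = {top_student n c}"
  by (auto simp: shift_matching_def students_def top_student_def split: if_splits)

lemma is_matching_shift_matching: "is_matching n {0..<n} (\<lambda>_. 1) (shift_matching n)"
proof -
  have "\<forall>c\<in>{0..<n}. card {s\<in>students n. shift_matching n s = Some c} \<le> 1"
    using shift_matching_holder by simp
  moreover have "\<forall>s. s \<notin> students n \<longrightarrow> shift_matching n s = None"
    by (simp add: shift_matching_def students_def)
  moreover have "\<forall>s c. shift_matching n s = Some c \<longrightarrow> c \<in> {0..<n}"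
    by (auto simp: shift_matching_def)
  ultimately show ?thesis
    unfolding is_matching_def by blast
qed

lemma stable_shift_matching: "stable_for n {0..<n} (\<lambda>_. 1) (cyclic_pref n) u (shift_matching n) w"
  unfolding stable_for_def
proof (rule notI, elim bexE conjE disjE)
  fix s c
  assume "c \<in> {0..<n}" "card {s'\<in>students n. shift_matching n s' = Some c} < 1"
  then show False
    by (simp add: shift_matching_holder)
next
  fix s c s'
  assume "c \<in> {0..<n}" "s' \<in> students n" "shift_matching n s' = Some c" "(s, s') \<in> cyclic_pref n c"
  moreover from this have "s' = top_student n c"
    by (auto simp: shift_matching_def top_student_def students_def split: if_splits)
  ultimately show False
    using cyclic_pref_top by simp
qed

lemma OPT_perturbed: "OPT n {0..<n} (\<lambda>_. 1) (cyclic_pref n) (quad_util n) (perturbed_dist n K) = 1"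
  by (rule OPT_eq_1_if_always_stable[OF valid_instance_perturbed is_matching_shift_matching
        stable_shift_matching])

lemma herf_ratio_power_limit:
  "(\<lambda>K. (real (K + 1) / real (n * K + 1)) ^ n) \<longlonglongrightarrow> (1 / real n) ^ n"
proof (cases "n = 0")
  case False
  have "(\<lambda>K. (1 + inverse (real K)) / (real n + inverse (real K))) \<longlonglongrightarrow> (1 + 0) / (real n + 0)"
    using False by (intro tendsto_intros tendsto_inverse_0_at_top filterlim_real_sequentially) auto
  moreover have "\<forall>\<^sub>F K in sequentially.
      (1 + inverse (real K)) / (real n + inverse (real K)) = real (K + 1) / real (n * K + 1)"
    using eventually_gt_at_top[of 0]
    by eventually_elim (simp add: divide_simps algebra_simps add_pos_nonneg add_nonneg_eq_0_iff)
  ultimately have "(\<lambda>K. real (K + 1) / real (n * K + 1)) \<longlonglongrightarrow> 1 / real n"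
    by (simp add: tendsto_cong)
  then show ?thesis
    by (rule tendsto_power)
qed simp

theorem proposition3:
  fixes n :: nat
  shows "\<forall>\<epsilon>>0. \<exists>M x r u \<mu>. valid_instance n M x r u \<mu> \<and> 0 < OPT n M x r u \<mu> \<and>
           (\<forall>nx. herf_rule n M u \<mu> nx \<longrightarrow>
              ProS n M x r u \<mu> (alg_out n M x r nx)
                \<le> ((1 / real n) ^ n + \<epsilon>) * OPT n M x r u \<mu>)"
proof (intro allI impI)
  fix \<epsilon> :: real
  assume "\<epsilon> > 0"
  then have "\<forall>\<^sub>F K in sequentially. (real (K + 1) / real (n * K + 1)) ^ n < (1 / real n) ^ n + \<epsilon>"
    by (intro order_tendstoD(2)[OF herf_ratio_power_limit]) simp
  then obtain K where K: "(real (K + 1) / real (n * K + 1)) ^ n < (1 / real n) ^ n + \<epsilon>"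
    by (meson eventually_sequentially order.refl)
  let ?ProS = "ProS n {0..<n} (\<lambda>_. 1) (cyclic_pref n) (quad_util n) (perturbed_dist n K)"
  let ?OPT = "OPT n {0..<n} (\<lambda>_. 1) (cyclic_pref n) (quad_util n) (perturbed_dist n K)"
  show "\<exists>M x r u \<mu>. valid_instance n M x r u \<mu> \<and> 0 < OPT n M x r u \<mu> \<and>
      (\<forall>nx. herf_rule n M u \<mu> nx \<longrightarrow>
         ProS n M x r u \<mu> (alg_out n M x r nx) \<le> ((1 / real n) ^ n + \<epsilon>) * OPT n M x r u \<mu>)"
  proof (intro exI[of _ "{0..<n}"] exI[of _ "\<lambda>_. 1"] exI[of _ "cyclic_pref n"] exI[of _ "quad_util n"]
      exI[of _ "perturbed_dist n K"] conjI allI impI)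
    show "valid_instance n {0..<n} (\<lambda>_. 1) (cyclic_pref n) (quad_util n) (perturbed_dist n K)"
      by (rule valid_instance_perturbed)
    show "0 < ?OPT"
      unfolding OPT_perturbed by simp
    fix nx
    assume herf: "herf_rule n {0..<n} (quad_util n) (perturbed_dist n K) nx"
    show "?ProS (alg_out n {0..<n} (\<lambda>_. 1) (cyclic_pref n) nx) \<le> ((1 / real n) ^ n + \<epsilon>) * ?OPT"
      unfolding alg_out_herf[OF herf] ProS_own_matching OPT_perturbed mult_1_right using K by linarith
  qed
qed

end
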